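(* Let $G=(V,E,\sigma)$ be a graph as in the context and $\Gamma$ a nonempty family of walks. Then the function $p\mapsto\mathrm{Mod}_p(\Gamma)$ is continuous on $[1,\infty)$.
   Context: Let $G=(V,E,\sigma)$ be a finite simple graph (directed or undirected) with edge weights $\sigma:E\to(0,\infty)$. A walk is a string of edges $e_1\dots e_r$, $r\ge1$, $e_i=(v_i,v_{i+1})\in E$, with $\rho$-length $\ell_\rho(\gamma)=\sum_i\rho(e_i)$. $A(\Gamma)=\{\rho:E\to\mathbb{R}:\rho\ge0,\ \ell_\rho(\gamma)\ge1\ \forall\gamma\in\Gamma\}$, $\mathcal{E}_p(\rho)=\sum_e\sigma(e)|\rho(e)|^p$, $\mathrm{Mod}_p(\Gamma)=\inf_{\rho\in A(\Gamma)}\mathcal{E}_p(\rho)$. *)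

theory Defs
  imports "HOL-Analysis.Analysis"
begin

text \<open>Edges are of an abstract type 'e; a walk is represented by its string of edges
  (a nonempty list).\<close>

definition dsimple :: "('v \<times> 'v) set \<Rightarrow> bool" where
  "dsimple E \<longleftrightarrow> finite E \<and> (\<forall>e\<in>E. fst e \<noteq> snd e)"

definition usimple :: "'v set set \<Rightarrow> bool" where
  "usimple E \<longleftrightarrow> finite E \<and> (\<forall>e\<in>E. card e = 2)"

definition dwalks :: "('v \<times> 'v) set \<Rightarrow> ('v \<times> 'v) list set" where
  "dwalks E = {es. es \<noteq> [] \<and> set es \<subseteq> E \<and>
      (\<forall>i. Suc i < length es \<longrightarrow> snd (es ! i) = fst (es ! Suc i))}"

definition uwalks :: "'v set set \<Rightarrow> 'v set list set" where
  "uwalks E = {es. es \<noteq> [] \<and> set es \<subseteq> E \<and>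
      (\<exists>vs. length vs = Suc (length es) \<and>
            (\<forall>i<length es. es ! i = {vs ! i, vs ! Suc i}))}"

definition rho_length :: "('e \<Rightarrow> real) \<Rightarrow> 'e list \<Rightarrow> real" where
  "rho_length \<rho> \<gamma> = sum_list (map \<rho> \<gamma>)"

definition admissible :: "'e set \<Rightarrow> 'e list set \<Rightarrow> ('e \<Rightarrow> real) set" where
  "admissible E \<Gamma> = {\<rho>. (\<forall>e\<in>E. \<rho> e \<ge> 0) \<and> (\<forall>\<gamma>\<in>\<Gamma>. rho_length \<rho> \<gamma> \<ge> 1)}"

definition energy :: "'e set \<Rightarrow> ('e \<Rightarrow> real) \<Rightarrow> real \<Rightarrow> ('e \<Rightarrow> real) \<Rightarrow> real" where
  "energy E \<sigma> p \<rho> = (\<Sum>e\<in>E. \<sigma> e * \<bar>\<rho> e\<bar> powr p)"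

definition Modulus :: "'e set \<Rightarrow> ('e \<Rightarrow> real) \<Rightarrow> 'e list set \<Rightarrow> real \<Rightarrow> real" where
  "Modulus E \<sigma> \<Gamma> p = Inf (energy E \<sigma> p ` admissible E \<Gamma>)"

end

theory Submission
  imports Defs
begin

text \<open>The modulus is Lipschitz in \<open>p \<ge> 1\<close> with constant \<open>\<Sum>e\<in>E. \<sigma> e\<close>.  Truncating an
  admissible density at height 1 keeps it admissible (every walk through an edge of
  density \<open>\<ge> 1\<close> already has length \<open>\<ge> 1\<close>) and does not increase its \<open>q\<close>-energy.  For
  values \<open>a \<in> [0,1]\<close> the map \<open>p \<mapsto> a powr p\<close> is 1-Lipschitz on \<open>[1,\<infinity>)\<close>, so the
  \<open>p\<close>-energy of the truncated density exceeds its \<open>q\<close>-energy by at most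
  \<open>\<bar>p - q\<bar> \<Sum>e\<in>E. \<sigma> e\<close>.  Taking infima gives the estimate in both directions.\<close>

lemma powr_le_powr_add_diff:
  fixes a p q :: real
  assumes "0 \<le> a" "a \<le> 1" "1 \<le> p" "p \<le> q"
  shows "a powr p \<le> a powr q + (q - p)"
proof (cases "a = 0")
  case True
  then show ?thesis using assms by simp
next
  case False
  then have a_pos: "0 < a" using assms by simp
  have "1 + (q - p) * ln a \<le> a powr (q - p)"
    using exp_ge_add_one_self[of "(q - p) * ln a"] a_pos by (simp add: powr_def mult.commute)
  moreover have "(q - p) * - ln a \<le> (q - p) * (1 / a)"
    using ln_le_minus_one[of "1 / a"] a_pos assms(4) by (intro mult_left_mono) (auto simp: ln_div)
  ultimately have "1 - a powr (q - p) \<le> (q - p) * (1 / a)"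
    by simp
  moreover have "0 \<le> 1 - a powr (q - p)"
    using powr_le1[of "q - p" a] assms by simp
  moreover have "a powr p \<le> a"
    using powr_le_one_le[of a p] a_pos assms by simp
  ultimately have "a powr p * (1 - a powr (q - p)) \<le> a * ((q - p) * (1 / a))"
    using a_pos by (intro mult_mono) auto
  moreover have "a powr p * (1 - a powr (q - p)) = a powr p - a powr q"
    using a_pos by (simp add: algebra_simps powr_diff)
  ultimately show ?thesis using a_pos by simp
qed

lemma powr_le_powr_add_abs_diff:
  fixes a p q :: real
  assumes "0 \<le> a" "a \<le> 1" "1 \<le> p" "1 \<le> q"
  shows "a powr p \<le> a powr q + \<bar>p - q\<bar>"
proof (cases "p \<le> q")
  case True
  then show ?thesis using powr_le_powr_add_diff[OF assms(1-3) True] by simp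
next
  case False
  then have "a powr p \<le> a powr q" using powr_mono'[of q p a] assms by simp
  then show ?thesis by simp
qed

lemma const_one_admissible:
  assumes "\<forall>\<gamma>\<in>\<Gamma>. \<gamma> \<noteq> []"
  shows "(\<lambda>_. 1) \<in> admissible E \<Gamma>"
  using assms by (auto simp: admissible_def rho_length_def sum_list_triv Suc_le_eq)

lemma min_one_admissible:
  assumes "\<rho> \<in> admissible E \<Gamma>" and "\<forall>\<gamma>\<in>\<Gamma>. set \<gamma> \<subseteq> E"
  shows "(\<lambda>e. min (\<rho> e) 1) \<in> admissible E \<Gamma>"
  unfolding admissible_def
proof (intro CollectI conjI ballI)
  have \<rho>_nonneg: "\<forall>e\<in>E. 0 \<le> \<rho> e" and \<rho>_long: "\<forall>\<gamma>\<in>\<Gamma>. 1 \<le> rho_length \<rho> \<gamma>"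
    using assms(1) by (auto simp: admissible_def)
  show "0 \<le> min (\<rho> e) 1" if "e \<in> E" for e
    using \<rho>_nonneg that by simp
  fix \<gamma> assume \<gamma>: "\<gamma> \<in> \<Gamma>"
  show "1 \<le> rho_length (\<lambda>e. min (\<rho> e) 1) \<gamma>"
  proof (cases "\<exists>e\<in>set \<gamma>. 1 \<le> \<rho> e")
    case True
    then obtain e where e: "e \<in> set \<gamma>" "1 \<le> \<rho> e" by auto
    have "min (\<rho> e) 1 \<le> sum_list (map (\<lambda>e. min (\<rho> e) 1) \<gamma>)"
    proof (rule member_le_sum_list)
      show "min (\<rho> e) 1 \<in> set (map (\<lambda>e. min (\<rho> e) 1) \<gamma>)" using e(1) by simp
      show "0 \<le> x" if "x \<in> set (map (\<lambda>e. min (\<rho> e) 1) \<gamma>)" for x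
        using that \<gamma> assms(2) \<rho>_nonneg by fastforce
    qed
    then show ?thesis using e(2) unfolding rho_length_def by simp
  next
    case False
    then have "map (\<lambda>e. min (\<rho> e) 1) \<gamma> = map \<rho> \<gamma>" by auto
    then show ?thesis using \<rho>_long \<gamma> unfolding rho_length_def by metis
  qed
qed

lemma Modulus_le_energy:
  assumes "\<forall>e\<in>E. 0 \<le> \<sigma> e" and "\<rho> \<in> admissible E \<Gamma>"
  shows "Modulus E \<sigma> \<Gamma> p \<le> energy E \<sigma> p \<rho>"
proof -
  have "bdd_below (energy E \<sigma> p ` admissible E \<Gamma>)"
    using assms(1) by (auto simp: bdd_below_def energy_def intro!: exI[of _ 0] sum_nonneg)
  then show ?thesis
    unfolding Modulus_def using assms(2) by (intro cInf_lower) auto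
qed

lemma energy_min_one_le:
  assumes "\<forall>e\<in>E. 0 \<le> \<sigma> e" "\<forall>e\<in>E. 0 \<le> \<rho> e" "1 \<le> p" "1 \<le> q"
  shows "energy E \<sigma> p (\<lambda>e. min (\<rho> e) 1) \<le> energy E \<sigma> q \<rho> + \<bar>p - q\<bar> * (\<Sum>e\<in>E. \<sigma> e)"
proof -
  have "\<sigma> e * \<bar>min (\<rho> e) 1\<bar> powr p \<le> \<sigma> e * \<bar>\<rho> e\<bar> powr q + \<bar>p - q\<bar> * \<sigma> e"
    if e: "e \<in> E" for e
  proof -
    have "\<bar>min (\<rho> e) 1\<bar> powr p \<le> \<bar>min (\<rho> e) 1\<bar> powr q + \<bar>p - q\<bar>"
      using powr_le_powr_add_abs_diff[of "min (\<rho> e) 1" p q] assms e by simp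
    also have "\<bar>min (\<rho> e) 1\<bar> powr q \<le> \<bar>\<rho> e\<bar> powr q"
      using assms e by (intro powr_mono2) auto
    finally have "\<sigma> e * \<bar>min (\<rho> e) 1\<bar> powr p \<le> \<sigma> e * (\<bar>\<rho> e\<bar> powr q + \<bar>p - q\<bar>)"
      using assms(1) e by (intro mult_left_mono) auto
    then show ?thesis by (simp add: algebra_simps)
  qed
  then have "energy E \<sigma> p (\<lambda>e. min (\<rho> e) 1)
      \<le> (\<Sum>e\<in>E. \<sigma> e * \<bar>\<rho> e\<bar> powr q + \<bar>p - q\<bar> * \<sigma> e)"
    unfolding energy_def by (rule sum_mono)
  then show ?thesis
    by (simp add: energy_def sum.distrib sum_distrib_left)
qed

lemma Modulus_le_Modulus_add:
  assumes "\<forall>e\<in>E. 0 \<le> \<sigma> e" and "\<forall>\<gamma>\<in>\<Gamma>. \<gamma> \<noteq> [] \<and> set \<gamma> \<subseteq> E"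
    and "1 \<le> p" "1 \<le> q"
  shows "Modulus E \<sigma> \<Gamma> p \<le> Modulus E \<sigma> \<Gamma> q + \<bar>p - q\<bar> * (\<Sum>e\<in>E. \<sigma> e)"
proof -
  have "Modulus E \<sigma> \<Gamma> p - \<bar>p - q\<bar> * (\<Sum>e\<in>E. \<sigma> e) \<le> Modulus E \<sigma> \<Gamma> q"
    unfolding Modulus_def[of E \<sigma> \<Gamma> q]
  proof (rule cInf_greatest)
    show "energy E \<sigma> q ` admissible E \<Gamma> \<noteq> {}"
      using const_one_admissible[of \<Gamma> E] assms(2) by auto
  next
    fix x assume "x \<in> energy E \<sigma> q ` admissible E \<Gamma>"
    then obtain \<rho> where \<rho>: "\<rho> \<in> admissible E \<Gamma>" and x: "x = energy E \<sigma> q \<rho>" by auto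
    have "Modulus E \<sigma> \<Gamma> p \<le> energy E \<sigma> p (\<lambda>e. min (\<rho> e) 1)"
      using assms \<rho> by (intro Modulus_le_energy min_one_admissible) auto
    also have "\<dots> \<le> x + \<bar>p - q\<bar> * (\<Sum>e\<in>E. \<sigma> e)"
      using energy_min_one_le[of E \<sigma> \<rho> p q] assms \<rho> x by (simp add: admissible_def)
    finally show "Modulus E \<sigma> \<Gamma> p - \<bar>p - q\<bar> * (\<Sum>e\<in>E. \<sigma> e) \<le> x" by simp
  qed
  then show ?thesis by simp
qed

lemma Modulus_lipschitz_on:
  assumes "\<forall>e\<in>E. 0 \<le> \<sigma> e" and "\<forall>\<gamma>\<in>\<Gamma>. \<gamma> \<noteq> [] \<and> set \<gamma> \<subseteq> E"
  shows "lipschitz_on (\<Sum>e\<in>E. \<sigma> e) {1..} (Modulus E \<sigma> \<Gamma>)"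
proof (rule lipschitz_onI)
  show "0 \<le> (\<Sum>e\<in>E. \<sigma> e)" using assms(1) by (simp add: sum_nonneg)
  fix p q :: real assume "p \<in> {1..}" "q \<in> {1..}"
  then show "dist (Modulus E \<sigma> \<Gamma> p) (Modulus E \<sigma> \<Gamma> q) \<le> (\<Sum>e\<in>E. \<sigma> e) * dist p q"
    using Modulus_le_Modulus_add[OF assms, of p q] Modulus_le_Modulus_add[OF assms, of q p]
    by (auto simp: dist_real_def abs_minus_commute mult.commute)
qed

theorem mainTheorem9:
  shows "(\<forall>(E :: ('v \<times> 'v) set) (\<sigma> :: ('v \<times> 'v) \<Rightarrow> real) \<Gamma>.
            dsimple E \<and> (\<forall>e\<in>E. \<sigma> e > 0) \<and> \<Gamma> \<subseteq> dwalks E \<and> \<Gamma> \<noteq> {} \<longrightarrow>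
            continuous_on {1..} (\<lambda>p. Modulus E \<sigma> \<Gamma> p))
       \<and> (\<forall>(E :: 'v set set) (\<sigma> :: 'v set \<Rightarrow> real) \<Gamma>.
            usimple E \<and> (\<forall>e\<in>E. \<sigma> e > 0) \<and> \<Gamma> \<subseteq> uwalks E \<and> \<Gamma> \<noteq> {} \<longrightarrow>
            continuous_on {1..} (\<lambda>p. Modulus E \<sigma> \<Gamma> p))"
proof (intro conjI allI impI)
  fix E :: "('v \<times> 'v) set" and \<sigma> :: "('v \<times> 'v) \<Rightarrow> real" and \<Gamma>
  assume "dsimple E \<and> (\<forall>e\<in>E. \<sigma> e > 0) \<and> \<Gamma> \<subseteq> dwalks E \<and> \<Gamma> \<noteq> {}"
  then have "lipschitz_on (\<Sum>e\<in>E. \<sigma> e) {1..} (Modulus E \<sigma> \<Gamma>)"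
    by (intro Modulus_lipschitz_on) (auto simp: dwalks_def less_imp_le)
  then show "continuous_on {1..} (\<lambda>p. Modulus E \<sigma> \<Gamma> p)"
    by (rule lipschitz_on_continuous_on)
next
  fix E :: "'v set set" and \<sigma> :: "'v set \<Rightarrow> real" and \<Gamma>
  assume "usimple E \<and> (\<forall>e\<in>E. \<sigma> e > 0) \<and> \<Gamma> \<subseteq> uwalks E \<and> \<Gamma> \<noteq> {}"
  then have "lipschitz_on (\<Sum>e\<in>E. \<sigma> e) {1..} (Modulus E \<sigma> \<Gamma>)"
    by (intro Modulus_lipschitz_on) (auto simp: uwalks_def less_imp_le)
  then show "continuous_on {1..} (\<lambda>p. Modulus E \<sigma> \<Gamma> p)"
    by (rule lipschitz_on_continuous_on)
qed

end
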